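(* Let $\mathcal{C}$ be a chordal $d$-uniform clutter on $[n]$ and let $\mathbf{e}$ and $\mathbf{e}'$ be two simplicial orders of $\mathcal{C}$. Then the simplicial multisets associated with $\mathbf{e}$ and $\mathbf{e}'$ coincide. In particular, all simplicial orders of $\mathcal{C}$ have the same length.
   Context: A $d$-uniform clutter $\mathcal{C}$ on $[n]$ is a set of $d$-element subsets of $[n]$. A $(d-1)$-subset $e$ is a submaximal circuit of $\mathcal{C}$ if $e\subset F$ for some $F\in\mathcal{C}$. A subset $V\subseteq[n]$ is a clique of $\mathcal{C}$ if every $d$-subset of $V$ belongs to $\mathcal{C}$. For a $(d-1)$-subset $e$, $\mathrm{N}_{\mathcal{C}}(e)=\{c\in[n]: e\cup\{c\}\in\mathcal{C}\}$ and $\mathrm{N}_{\mathcal{C}}[e]=e\cup\mathrm{N}_{\mathcal{C}}(e)$; $e$ is simplicial in $\mathcal{C}$ if it is a submaximal circuit and $\mathrm{N}_{\mathcal{C}}[e]$ is a clique. Deletion: $\mathcal{C}\setminus e=\{F\in\mathcal{C}: e\not\subset F\}$; $\mathcal{C}_{e_1\cdots e_i}$ denotes successive deletion of $e_1,\ldots,e_i$. A simplicial order of $\mathcal{C}$ is a sequence $e_1,\ldots,e_r$ with $e_1$ simplicial in $\mathcal{C}$, $e_i$ simplicial in $\mathcal{C}_{e_1\cdots e_{i-1}}$ for $i>1$, and $\mathcal{C}_{e_1\cdots e_r}=\emptyset$; $\mathcal{C}$ is chordal if it has a simplicial order. The simplicial multiset of the order is the multiset $\{N_1,\ldots,N_r\}$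 with $N_1=|\mathrm{N}_{\mathcal{C}}(e_1)|$, $N_i=|\mathrm{N}_{\mathcal{C}_{e_1\cdots e_{i-1}}}(e_i)|$ for $i>1$. *)

theory Defs
  imports Main "HOL-Library.Multiset"
begin

definition uniform_clutter :: "nat \<Rightarrow> nat \<Rightarrow> nat set set \<Rightarrow> bool" where
  "uniform_clutter n d C \<longleftrightarrow> (\<forall>F\<in>C. F \<subseteq> {1..n} \<and> card F = d)"

definition submaximal_circuit :: "nat \<Rightarrow> nat set set \<Rightarrow> nat set \<Rightarrow> bool" where
  "submaximal_circuit d C e \<longleftrightarrow> card e = d - 1 \<and> finite e \<and> (\<exists>F\<in>C. e \<subset> F)"

definition is_clique :: "nat \<Rightarrow> nat \<Rightarrow> nat set set \<Rightarrow> nat set \<Rightarrow> bool" where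
  "is_clique n d C V \<longleftrightarrow> V \<subseteq> {1..n} \<and> (\<forall>S. S \<subseteq> V \<and> card S = d \<longrightarrow> S \<in> C)"

definition nbhd :: "nat \<Rightarrow> nat set set \<Rightarrow> nat set \<Rightarrow> nat set" where
  "nbhd n C e = {c \<in> {1..n}. e \<union> {c} \<in> C}"

definition closed_nbhd :: "nat \<Rightarrow> nat set set \<Rightarrow> nat set \<Rightarrow> nat set" where
  "closed_nbhd n C e = e \<union> nbhd n C e"

definition simplicial :: "nat \<Rightarrow> nat \<Rightarrow> nat set set \<Rightarrow> nat set \<Rightarrow> bool" where
  "simplicial n d C e \<longleftrightarrow> submaximal_circuit d C e \<and> is_clique n d C (closed_nbhd n C e)"

definition delete :: "nat set set \<Rightarrow> nat set \<Rightarrow> nat set set" where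
  "delete C e = {F \<in> C. \<not> e \<subseteq> F}"

fun simplicial_order :: "nat \<Rightarrow> nat \<Rightarrow> nat set set \<Rightarrow> nat set list \<Rightarrow> bool" where
  "simplicial_order n d C [] \<longleftrightarrow> C = {}"
| "simplicial_order n d C (e # es) \<longleftrightarrow>
     simplicial n d C e \<and> simplicial_order n d (delete C e) es"

definition chordal :: "nat \<Rightarrow> nat \<Rightarrow> nat set set \<Rightarrow> bool" where
  "chordal n d C \<longleftrightarrow> (\<exists>es. simplicial_order n d C es)"

fun simplicial_seq :: "nat \<Rightarrow> nat set set \<Rightarrow> nat set list \<Rightarrow> nat list" where
  "simplicial_seq n C [] = []"
| "simplicial_seq n C (e # es) = card (nbhd n C e) # simplicial_seq n (delete C e) es"

definition simplicial_multiset :: "nat \<Rightarrow> nat set set \<Rightarrow> nat set list \<Rightarrow> nat multiset" where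
  "simplicial_multiset n C es = mset (simplicial_seq n C es)"

end

theory Submission
  imports Defs
begin

text \<open>Deleting a simplicial submaximal circuit e destroys exactly the cliques of size
  d - 1 + j that contain e, and these are the sets e \<union> S with S a j-subset of N(e).
  Hence along any simplicial order the number of (d - 1 + j)-cliques of the clutter equals
  the sum of (N_i choose j) for every j \<ge> 1, a quantity independent of the order. These
  binomial moments determine a multiset of positive integers: its largest possible element m
  occurs exactly (the sum of (N_i choose m)) times, and one peels it off and continues.\<close>

subsection \<open>Binomial moments of a multiset\<close>

definition binomial_moment :: "nat multiset \<Rightarrow> nat \<Rightarrow> nat" where
  "binomial_moment M j = (\<Sum>x\<in>#M. x choose j)"

lemma binomial_moment_empty [simp]: "binomial_moment {#} j = 0"
  by (simp add: binomial_moment_def)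

lemma binomial_moment_add_mset [simp]:
  "binomial_moment (add_mset x M) j = (x choose j) + binomial_moment M j"
  by (simp add: binomial_moment_def)

lemma binomial_moment_union: "binomial_moment (M + N) j = binomial_moment M j + binomial_moment N j"
  by (simp add: binomial_moment_def)

lemma binomial_moment_replicate_mset: "binomial_moment (replicate_mset c x) j = c * (x choose j)"
  by (induction c) auto

lemma binomial_moment_eq_count_if_bounded:
  assumes "set_mset M \<subseteq> {..m}"
  shows "binomial_moment M m = count M m"
  using assms by (induction M) (auto simp: binomial_eq_0)

lemma multiset_eq_if_binomial_moments_eq_bounded:
  assumes "set_mset M \<subseteq> {1..b}" "set_mset M' \<subseteq> {1..b}"
    and "\<forall>j\<ge>1. binomial_moment M j = binomial_moment M' j"
  shows "M = M'"
  using assms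
proof (induction b arbitrary: M M')
  case 0
  then show ?case by simp
next
  case (Suc b)
  let ?m = "Suc b"
  have top: "count M ?m = count M' ?m"
    using Suc.prems binomial_moment_eq_count_if_bounded[of M ?m] binomial_moment_eq_count_if_bounded[of M' ?m]
    by fastforce
  define R where "R N = {#x \<in># N. x \<noteq> ?m#}" for N
  have split: "N = R N + replicate_mset (count N ?m) ?m" for N
    unfolding R_def using multiset_partition[where M = N and P = "\<lambda>x. x \<noteq> ?m"]
      filter_eq_replicate_mset[where D = N and x = ?m] by simp
  have moment_split: "binomial_moment N j = binomial_moment (R N) j + count N ?m * (?m choose j)"
    for N j
    by (subst split) (simp add: binomial_moment_union binomial_moment_replicate_mset)
  have "\<forall>j\<ge>1. binomial_moment (R M) j = binomial_moment (R M') j"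
    using Suc.prems(3) top moment_split[of M] moment_split[of M'] by simp
  moreover have "set_mset (R N) \<subseteq> {1..b}" if "set_mset N \<subseteq> {1..?m}" for N
    using that by (auto simp: R_def le_Suc_eq)
  ultimately have "R M = R M'"
    using Suc.IH[of "R M" "R M'"] Suc.prems(1,2) by blast
  have "M = R M + replicate_mset (count M ?m) ?m"
    by (rule split)
  also have "\<dots> = R M' + replicate_mset (count M' ?m) ?m"
    using \<open>R M = R M'\<close> top by simp
  also have "\<dots> = M'"
    by (rule split[symmetric])
  finally show ?case .
qed

lemma multiset_eq_if_binomial_moments_eq:
  assumes "0 \<notin># M" "0 \<notin># M'"
    and "\<forall>j\<ge>1. binomial_moment M j = binomial_moment M' j"
  shows "M = M'"
proof (rule multiset_eq_if_binomial_moments_eq_bounded[OF _ _ assms(3)])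
  let ?b = "Max (set_mset (M + M'))"
  show "set_mset M \<subseteq> {1..?b}" "set_mset M' \<subseteq> {1..?b}"
    using assms(1,2) by (auto simp: Suc_le_eq intro: gr0I)
qed

lemma uniform_clutter_delete: "uniform_clutter n d C \<Longrightarrow> uniform_clutter n d (delete C e)"
  by (auto simp: uniform_clutter_def delete_def)

lemma finite_nbhd: "finite (nbhd n C e)"
  by (simp add: nbhd_def)

lemma submaximal_circuit_dim_pos:
  assumes "uniform_clutter n d C" "submaximal_circuit d C e"
  shows "0 < d"
proof -
  obtain F where F: "F \<in> C" "e \<subset> F"
    using assms(2) by (auto simp: submaximal_circuit_def)
  then have "finite F" "card F = d"
    using assms(1) finite_subset[of F "{1..n}"] by (auto simp: uniform_clutter_def)
  then show ?thesis
    using F(2) psubset_card_mono by fastforce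
qed

lemma submaximal_circuit_nbhd_disjoint:
  assumes "uniform_clutter n d C" "submaximal_circuit d C e"
  shows "e \<inter> nbhd n C e = {}"
proof -
  have "e \<notin> C"
    using assms submaximal_circuit_dim_pos[OF assms]
    by (auto simp: uniform_clutter_def submaximal_circuit_def)
  then show ?thesis
    by (auto simp: nbhd_def insert_absorb)
qed

lemma submaximal_circuit_nbhd_nonempty:
  assumes "uniform_clutter n d C" "submaximal_circuit d C e"
  shows "nbhd n C e \<noteq> {}"
proof -
  obtain F where F: "F \<in> C" "e \<subset> F"
    using assms(2) by (auto simp: submaximal_circuit_def)
  have F_props: "F \<subseteq> {1..n}" "card F = d" "finite F"
    using assms(1) F(1) finite_subset[of F "{1..n}"] by (auto simp: uniform_clutter_def)
  obtain c where c: "c \<in> F" "c \<notin> e"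
    using F(2) by auto
  have "card (insert c e) = d"
    using c assms(2) submaximal_circuit_dim_pos[OF assms] by (simp add: submaximal_circuit_def)
  then have "insert c e = F"
    using c F(2) F_props card_subset_eq[of F "insert c e"] by auto
  then have "c \<in> nbhd n C e"
    using F(1) F_props(1) c(1) by (auto simp: nbhd_def)
  then show ?thesis by auto
qed

definition cliques :: "nat \<Rightarrow> nat \<Rightarrow> nat set set \<Rightarrow> nat \<Rightarrow> nat set set" where
  "cliques n d C k = {V. card V = k \<and> is_clique n d C V}"

lemma finite_cliques: "finite (cliques n d C k)"
  by (rule finite_subset[of _ "Pow {1..n}"]) (auto simp: cliques_def is_clique_def)

lemma is_clique_finite: "is_clique n d C V \<Longrightarrow> finite V"
  by (auto simp: is_clique_def intro: finite_subset)

lemma is_clique_subset: "is_clique n d C V \<Longrightarrow> W \<subseteq> V \<Longrightarrow> is_clique n d C W"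
  by (auto simp: is_clique_def)

lemma is_clique_empty_card_less:
  assumes "is_clique n d {} V"
  shows "card V < d"
proof (rule ccontr)
  assume "\<not> card V < d"
  then obtain S where "S \<subseteq> V" "card S = d"
    using obtain_subset_with_card_n by (metis not_less)
  then show False
    using assms by (auto simp: is_clique_def)
qed

lemma cliques_empty: "d \<le> k \<Longrightarrow> cliques n d {} k = {}"
  using is_clique_empty_card_less by (fastforce simp: cliques_def)

lemma is_clique_delete_iff:
  "\<not> e \<subseteq> V \<Longrightarrow> is_clique n d (delete C e) V \<longleftrightarrow> is_clique n d C V"
  by (auto simp: is_clique_def delete_def)

lemma is_clique_delete_not_superset:
  assumes clique: "is_clique n d (delete C e) V" and "card e \<le> d" "d \<le> card V"
  shows "\<not> e \<subseteq> V"
proof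
  assume sub: "e \<subseteq> V"
  have fin: "finite V" "finite e"
    using is_clique_finite[OF clique] sub finite_subset by auto
  have "d - card e \<le> card (V - e)"
    using assms(3) sub fin by (simp add: card_Diff_subset)
  then obtain T where T: "T \<subseteq> V - e" "card T = d - card e"
    using obtain_subset_with_card_n by metis
  have "card (e \<union> T) = d"
    using T assms(2) fin finite_subset[of T V] by (subst card_Un_disjoint) auto
  moreover have "e \<union> T \<subseteq> V"
    using sub T(1) by blast
  ultimately have "e \<union> T \<in> delete C e"
    using clique by (simp add: is_clique_def)
  then show False
    by (simp add: delete_def)
qed

lemma is_clique_superset_iff:
  assumes uc: "uniform_clutter n d C" and s: "simplicial n d C e" and sub: "e \<subseteq> V"
  shows "is_clique n d C V \<longleftrightarrow> V - e \<subseteq> nbhd n C e"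
proof
  assume clique: "is_clique n d C V"
  show "V - e \<subseteq> nbhd n C e"
  proof
    fix c assume c: "c \<in> V - e"
    have "0 < d"
      using submaximal_circuit_dim_pos uc s by (auto simp: simplicial_def)
    then have "card (e \<union> {c}) = d"
      using c s by (auto simp: simplicial_def submaximal_circuit_def)
    then show "c \<in> nbhd n C e"
      using clique c sub by (auto simp: is_clique_def nbhd_def)
  qed
next
  assume "V - e \<subseteq> nbhd n C e"
  then have "V \<subseteq> closed_nbhd n C e"
    by (auto simp: closed_nbhd_def)
  then show "is_clique n d C V"
    using s is_clique_subset by (auto simp: simplicial_def)
qed

subsection \<open>Counting cliques along a simplicial order\<close>

lemma cliques_superset_eq_image:
  assumes uc: "uniform_clutter n d C" and s: "simplicial n d C e"
  shows "{V \<in> cliques n d C (card e + j). e \<subseteq> V} =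
    (\<union>) e ` {S. S \<subseteq> nbhd n C e \<and> card S = j}"
proof -
  have disj: "e \<inter> nbhd n C e = {}" and fin: "finite e"
    using submaximal_circuit_nbhd_disjoint[OF uc] s by (auto simp: simplicial_def submaximal_circuit_def)
  have card_union: "card (e \<union> S) = card e + card S" if "S \<subseteq> nbhd n C e" for S
    using that disj fin finite_subset[OF that finite_nbhd] by (subst card_Un_disjoint) auto
  show ?thesis
  proof (intro equalityI subsetI)
    fix V assume "V \<in> {V \<in> cliques n d C (card e + j). e \<subseteq> V}"
    then have V: "card V = card e + j" "is_clique n d C V" "e \<subseteq> V"
      by (auto simp: cliques_def)
    have "V - e \<subseteq> nbhd n C e" "V = e \<union> (V - e)"
      using V is_clique_superset_iff[OF uc s] by auto
    moreover have "card (V - e) = j"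
      using V fin is_clique_finite by (simp add: card_Diff_subset)
    ultimately show "V \<in> (\<union>) e ` {S. S \<subseteq> nbhd n C e \<and> card S = j}"
      by blast
  next
    fix V assume "V \<in> (\<union>) e ` {S. S \<subseteq> nbhd n C e \<and> card S = j}"
    then obtain S where "S \<subseteq> nbhd n C e" "card S = j" "V = e \<union> S"
      by auto
    then show "V \<in> {V \<in> cliques n d C (card e + j). e \<subseteq> V}"
      using card_union is_clique_superset_iff[OF uc s, of V] by (auto simp: cliques_def)
  qed
qed

lemma card_cliques_superset:
  assumes uc: "uniform_clutter n d C" and s: "simplicial n d C e"
  shows "card {V \<in> cliques n d C (card e + j). e \<subseteq> V} = card (nbhd n C e) choose j"
proof -
  have "e \<inter> nbhd n C e = {}"
    using submaximal_circuit_nbhd_disjoint[OF uc] s by (simp add: simplicial_def)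
  then have "inj_on ((\<union>) e) {S. S \<subseteq> nbhd n C e \<and> card S = j}"
    by (auto intro!: inj_onI)
  then show ?thesis
    by (simp add: cliques_superset_eq_image[OF uc s] card_image n_subsets finite_nbhd)
qed

lemma card_cliques_delete_simplicial:
  assumes uc: "uniform_clutter n d C" and s: "simplicial n d C e" and "1 \<le> j"
  shows "card (cliques n d C (d - 1 + j)) =
    card (cliques n d (delete C e) (d - 1 + j)) + (card (nbhd n C e) choose j)"
proof -
  let ?k = "d - 1 + j"
  have e: "card e = d - 1" "0 < d"
    using s submaximal_circuit_dim_pos[OF uc] by (auto simp: simplicial_def submaximal_circuit_def)
  have avoiding: "{V \<in> cliques n d C ?k. \<not> e \<subseteq> V} = cliques n d (delete C e) ?k"
  proof -
    have "\<not> e \<subseteq> V" if "V \<in> cliques n d (delete C e) ?k" for V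
      using that is_clique_delete_not_superset[of n d C e V] e assms(3) by (auto simp: cliques_def)
    then show ?thesis
      using is_clique_delete_iff[of e _ n d C] by (auto simp: cliques_def)
  qed
  have "card (cliques n d C ?k) =
      card ({V \<in> cliques n d C ?k. \<not> e \<subseteq> V} \<union> {V \<in> cliques n d C ?k. e \<subseteq> V})"
    by (rule arg_cong[where f = card]) blast
  also have "\<dots> = card {V \<in> cliques n d C ?k. \<not> e \<subseteq> V} + card {V \<in> cliques n d C ?k. e \<subseteq> V}"
    by (rule card_Un_disjoint) (use finite_cliques[of n d C ?k] in auto)
  also have "card {V \<in> cliques n d C ?k. \<not> e \<subseteq> V} = card (cliques n d (delete C e) ?k)"
    by (simp only: avoiding)
  also have "card {V \<in> cliques n d C ?k. e \<subseteq> V} = card (nbhd n C e) choose j"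
    using card_cliques_superset[OF uc s, of j] e by simp
  finally show ?thesis .
qed

lemma simplicial_multiset_Nil [simp]: "simplicial_multiset n C [] = {#}"
  by (simp add: simplicial_multiset_def)

lemma simplicial_multiset_Cons [simp]:
  "simplicial_multiset n C (e # es) =
    add_mset (card (nbhd n C e)) (simplicial_multiset n (delete C e) es)"
  by (simp add: simplicial_multiset_def)

lemma size_simplicial_multiset: "size (simplicial_multiset n C es) = length es"
  by (induction es arbitrary: C) auto

lemma card_cliques_eq_binomial_moment:
  assumes "uniform_clutter n d C" "simplicial_order n d C es" "1 \<le> j"
  shows "card (cliques n d C (d - 1 + j)) = binomial_moment (simplicial_multiset n C es) j"
  using assms(1,2)
proof (induction es arbitrary: C)
  case Nil
  then show ?case using assms(3) by (simp add: cliques_empty)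
next
  case (Cons e es)
  then have "simplicial n d C e" "simplicial_order n d (delete C e) es"
    by simp_all
  then show ?case
    using card_cliques_delete_simplicial[OF Cons.prems(1) _ assms(3)]
      Cons.IH[OF uniform_clutter_delete[OF Cons.prems(1)]] by simp
qed

lemma zero_not_in_simplicial_multiset:
  "uniform_clutter n d C \<Longrightarrow> simplicial_order n d C es \<Longrightarrow> 0 \<notin># simplicial_multiset n C es"
proof (induction es arbitrary: C)
  case (Cons e es)
  then show ?case
    using submaximal_circuit_nbhd_nonempty finite_nbhd uniform_clutter_delete
    by (auto simp: simplicial_def)
qed simp

theorem corollary2p2:
  fixes n d :: nat and C :: "nat set set" and es es' :: "nat set list"
  assumes "uniform_clutter n d C"
    and "chordal n d C"
    and "simplicial_order n d C es"
    and "simplicial_order n d C es'"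
  shows "simplicial_multiset n C es = simplicial_multiset n C es' \<and> length es = length es'"
proof -
  have "simplicial_multiset n C es = simplicial_multiset n C es'"
  proof (rule multiset_eq_if_binomial_moments_eq)
    show "0 \<notin># simplicial_multiset n C es" "0 \<notin># simplicial_multiset n C es'"
      using zero_not_in_simplicial_multiset assms(1,3,4) by auto
    show "\<forall>j\<ge>1. binomial_moment (simplicial_multiset n C es) j =
        binomial_moment (simplicial_multiset n C es') j"
      using card_cliques_eq_binomial_moment assms(1,3,4) by metis
  qed
  then show ?thesis
    using size_simplicial_multiset by metis
qed

end
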